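(* Let $D$ be a collection of $10$ points of $\mathbb{CP}^1$ counted with multiplicities (i.e. an effective divisor of degree $10$ on $\mathbb{CP}^1$) whose support consists of at least $3$ distinct points, and let $T$ be the group of Möbius transformations of $\mathbb{CP}^1$ that map $D$ to itself (preserving multiplicities). Then $|T| \leq 24$. *)

theory Defs
  imports Complex_Main "HOL-Library.Multiset"
begin

text \<open>The Riemann sphere CP^1 is modelled as complex option, None being the point at infinity.\<close>
type_synonym cp1 = "complex option"

definition moebius :: "complex \<Rightarrow> complex \<Rightarrow> complex \<Rightarrow> complex \<Rightarrow> cp1 \<Rightarrow> cp1" where
  "moebius a b c d p =
     (case p of
        None \<Rightarrow> (if c = 0 then None else Some (a / c))
      | Some z \<Rightarrow> (if c * z + d = 0 then None else Some ((a * z + b) / (c * z + d))))"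

definition is_moebius :: "(cp1 \<Rightarrow> cp1) \<Rightarrow> bool" where
  "is_moebius f \<longleftrightarrow> (\<exists>a b c d. a * d - b * c \<noteq> 0 \<and> f = moebius a b c d)"

definition moebius_stabilizer :: "cp1 multiset \<Rightarrow> (cp1 \<Rightarrow> cp1) set" where
  "moebius_stabilizer D = {f. is_moebius f \<and> image_mset f D = D}"

end

theory Submission
  imports Defs "HOL-Algebra.Group_Action"
begin

text \<open>
  A Moebius map of finite order other than the identity has exactly two fixed points: three
  fixed points force the identity, and a parabolic map has infinite order. The stabilizer T of D
  is finite, because an element of it is determined by the images of three support points; so
  every non-identity element of T has exactly two fixed points, its poles. Burnside's lemma for
  the action of T on the set P of poles gives k N = |P| + 2 (N - 1), where N = |T| and k is the
  number of orbits. If N \<ge> 25, every support point has an orbit of size at most 10, hence a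
  non-trivial stabilizer, so it is a pole. Since every pole orbit has size at most N/2, this forces
  k = 3 with orbit sizes N/a, N/b, N/c, where 1/a + 1/b + 1/c = 1 + 2/N. For N \<ge> 25 at most one
  of these orbits has size at most 10 and that one has size 2, too small to hold the support of D.
\<close>

section \<open>Moebius transformations\<close>

text \<open>In homogeneous coordinates a Moebius map acts linearly, which turns composition of Moebius
  maps into multiplication of their matrices.\<close>
definition proj_point :: "complex \<Rightarrow> complex \<Rightarrow> cp1" where
  "proj_point x y = (if y = 0 then None else Some (x / y))"

lemma proj_point_cases: "p = proj_point 1 0 \<or> (\<exists>z. p = proj_point z 1)"
  by (cases p) (auto simp: proj_point_def)

lemma moebius_proj_point:
  assumes "x \<noteq> 0 \<or> y \<noteq> 0"
  shows "moebius a b c d (proj_point x y) = proj_point (a*x + b*y) (c*x + d*y)"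
proof (cases "y = 0")
  case True
  then show ?thesis using assms by (simp add: moebius_def proj_point_def)
next
  case False
  have "c * (x / y) + d = (c*x + d*y) / y" "a * (x / y) + b = (a*x + b*y) / y"
    using False by (simp_all add: field_simps)
  then show ?thesis using False by (simp add: moebius_def proj_point_def)
qed

lemma moebius_comp:
  assumes "a' * d' - b' * c' \<noteq> 0"
  shows "moebius a b c d \<circ> moebius a' b' c' d' =
         moebius (a*a' + b*c') (a*b' + b*d') (c*a' + d*c') (c*b' + d*d')"
proof
  fix p
  obtain x y where p: "p = proj_point x y" and xy: "x \<noteq> 0 \<or> y \<noteq> 0"
    using proj_point_cases[of p] by fastforce
  have "a'*x + b'*y \<noteq> 0 \<or> c'*x + d'*y \<noteq> 0"
  proof (rule ccontr)
    assume "\<not> ?thesis"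
    then have "a'*x + b'*y = 0" "c'*x + d'*y = 0" by auto
    then have "(a'*d' - b'*c') * x = 0" "(a'*d' - b'*c') * y = 0"
      by algebra+
    then show False using assms xy by simp
  qed
  then show "(moebius a b c d \<circ> moebius a' b' c' d') p =
        moebius (a*a' + b*c') (a*b' + b*d') (c*a' + d*c') (c*b' + d*d') p"
    using xy by (simp add: p moebius_proj_point; simp add: algebra_simps)
qed

lemma proj_point_scale: "k \<noteq> 0 \<Longrightarrow> proj_point (k*x) (k*y) = proj_point x y"
  by (simp add: proj_point_def)

lemma moebius_scale:
  assumes "k \<noteq> 0"
  shows "moebius (k*a) (k*b) (k*c) (k*d) = moebius a b c d"
proof
  fix p
  obtain x y where p: "p = proj_point x y" and xy: "x \<noteq> 0 \<or> y \<noteq> 0"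
    using proj_point_cases[of p] by fastforce
  have "moebius (k*a) (k*b) (k*c) (k*d) p = proj_point (k*(a*x + b*y)) (k*(c*x + d*y))"
    using xy by (simp add: p moebius_proj_point algebra_simps)
  also have "\<dots> = moebius a b c d p"
    using xy by (simp add: p moebius_proj_point proj_point_scale[OF assms])
  finally show "moebius (k*a) (k*b) (k*c) (k*d) p = moebius a b c d p" .
qed

lemma moebius_id: "moebius 1 0 0 1 = id"
proof
  fix p show "moebius 1 0 0 1 p = id p" by (cases p) (simp_all add: moebius_def)
qed

lemma moebius_eq_id_iff:
  assumes "a*d - b*c \<noteq> 0"
  shows "moebius a b c d = id \<longleftrightarrow> b = 0 \<and> c = 0 \<and> a = d"
proof
  assume id: "moebius a b c d = id"
  have c: "c = 0" using fun_cong[OF id, of None] by (simp add: moebius_def split: if_splits)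
  then have "d \<noteq> 0" using assms by auto
  moreover have "moebius a b c d (Some 0) = Some 0" "moebius a b c d (Some 1) = Some 1"
    using id by simp_all
  ultimately show "b = 0 \<and> c = 0 \<and> a = d" using c by (auto simp: moebius_def split: if_splits)
next
  assume "b = 0 \<and> c = 0 \<and> a = d"
  moreover have "a \<noteq> 0" using assms calculation by auto
  ultimately show "moebius a b c d = id"
    using moebius_scale[of a 1 0 0 1] moebius_id by simp
qed

lemma is_moebius_id: "is_moebius id"
proof -
  have "1 * 1 - 0 * 0 \<noteq> (0::complex)" by simp
  then show ?thesis unfolding is_moebius_def using moebius_id by metis
qed

lemma is_moebius_comp:
  assumes "is_moebius f" "is_moebius g"
  shows "is_moebius (f \<circ> g)"
proof -
  obtain a b c d a' b' c' d' where
    f: "a*d - b*c \<noteq> 0" "f = moebius a b c d" and g: "a'*d' - b'*c' \<noteq> 0" "g = moebius a' b' c' d'"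
    using assms unfolding is_moebius_def by blast
  have "(a*a' + b*c') * (c*b' + d*d') - (a*b' + b*d') * (c*a' + d*c') = (a*d - b*c) * (a'*d' - b'*c')"
    by (simp add: algebra_simps)
  then have "(a*a' + b*c') * (c*b' + d*d') - (a*b' + b*d') * (c*a' + d*c') \<noteq> 0"
    using f(1) g(1) by simp
  then show ?thesis
    unfolding is_moebius_def f g moebius_comp[OF g(1)] by blast
qed

lemma is_moebius_inverse:
  assumes "is_moebius f"
  shows "\<exists>g. is_moebius g \<and> g \<circ> f = id \<and> f \<circ> g = id"
proof -
  obtain a b c d where det: "a*d - b*c \<noteq> 0" and f: "f = moebius a b c d"
    using assms unfolding is_moebius_def by blast
  let ?g = "moebius d (-b) (-c) a"
  have det': "d*a - (-b)*(-c) \<noteq> 0" using det by (simp add: algebra_simps)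
  have "?g \<circ> f = moebius (d*a - b*c) 0 0 (a*d - b*c)" "f \<circ> ?g = moebius (a*d - b*c) 0 0 (a*d - b*c)"
    unfolding f moebius_comp[OF det] moebius_comp[OF det'] by (simp_all add: algebra_simps)
  then have "?g \<circ> f = id" "f \<circ> ?g = id"
    using moebius_eq_id_iff det by (simp_all add: mult.commute)
  then show ?thesis using det' unfolding is_moebius_def by blast
qed

lemma moebius_fixes_finite_iff:
  assumes "a*d - b*c \<noteq> 0"
  shows "moebius a b c d (Some z) = Some z \<longleftrightarrow> c*z^2 + (d - a)*z - b = 0"
proof
  assume "moebius a b c d (Some z) = Some z"
  then have "c*z + d \<noteq> 0" "(a*z + b) / (c*z + d) = z"
    by (auto simp: moebius_def split: if_splits)
  then have "a*z + b = z * (c*z + d)" by (simp add: field_simps)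
  then show "c*z^2 + (d - a)*z - b = 0" by (simp add: algebra_simps power2_eq_square)
next
  assume "c*z^2 + (d - a)*z - b = 0"
  then have eq: "a*z + b = z * (c*z + d)" by (simp add: algebra_simps power2_eq_square)
  have "c*z + d \<noteq> 0"
  proof
    assume zero: "c*z + d = 0"
    then have "a*z + b = 0" using eq by simp
    moreover have "a*d - b*c = a*(c*z + d) - c*(a*z + b)" by (simp add: algebra_simps)
    ultimately show False using assms zero by simp
  qed
  then show "moebius a b c d (Some z) = Some z"
    using eq by (simp add: moebius_def field_simps)
qed

lemma quadratic_two_roots:
  fixes c e f z w :: "'a::idom"
  assumes "c*z^2 + e*z - f = 0" "c*w^2 + e*w - f = 0" "z \<noteq> w"
  shows "c*(z + w) + e = 0"
proof -
  have "(z - w) * (c*(z + w) + e) = 0"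
    using assms(1,2) by (simp add: algebra_simps power2_eq_square)
  then show ?thesis using assms(3) by simp
qed

lemma is_moebius_three_fixed_points:
  assumes "is_moebius f" "f p = p" "f q = q" "f r = r" "p \<noteq> q" "p \<noteq> r" "q \<noteq> r"
  shows "f = id"
proof -
  obtain a b c d where det: "a*d - b*c \<noteq> 0" and f: "f = moebius a b c d"
    using assms(1) unfolding is_moebius_def by blast
  have root: "c*z^2 + (d - a)*z - b = 0" if "f (Some z) = Some z" for z
    using that moebius_fixes_finite_iff[OF det] f by simp
  show ?thesis
  proof (cases "c = 0")
    case False
    then have "f None \<noteq> None" by (simp add: f moebius_def)
    then obtain z1 z2 z3 where "p = Some z1" "q = Some z2" "r = Some z3"
      using assms(2-4) by (metis option.exhaust)
    then have "c*(z1 + z2) + (d - a) = 0" "c*(z1 + z3) + (d - a) = 0"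
      using quadratic_two_roots root assms(2-7) by blast+
    then have "c * (z2 - z3) = 0" by algebra
    then show ?thesis using False assms(7) \<open>q = Some z2\<close> \<open>r = Some z3\<close> by simp
  next
    case True
    obtain z1 z2 where "z1 \<noteq> z2" "Some z1 \<in> {p, q, r}" "Some z2 \<in> {p, q, r}"
      using assms(5-7) by (cases p; cases q; cases r) auto
    then have "d - a = 0" "(d - a)*z1 - b = 0"
      using quadratic_two_roots[of c z1 "d - a" b z2] root assms(2-4) True by auto
    then show ?thesis using moebius_eq_id_iff[OF det] f True by simp
  qed
qed

text \<open>For a parabolic map the matrix M has the double eigenvalue l, so M - l I is nilpotent and
  M^n is a scalar multiple of l I + n (M - l I).\<close>
lemma moebius_funpow_parabolic:
  assumes det: "a*d - b*c \<noteq> 0" and parabolic: "(a - d)^2 + 4*b*c = 0" and l: "2*l = a + d"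
  shows "(moebius a b c d)^^n =
         moebius (l + of_nat n * (a - l)) (of_nat n * b) (of_nat n * c) (l + of_nat n * (d - l))"
proof -
  have "a*d - b*c = l^2" using parabolic l by algebra
  then have "l \<noteq> 0" using det by auto
  show ?thesis
  proof (induction n)
    case 0
    have "moebius l 0 0 l = id"
      using moebius_eq_id_iff[where a=l and b=0 and c=0 and d=l] \<open>l \<noteq> 0\<close> by simp
    then show ?case by simp
  next
    case (Suc n)
    let ?m = "of_nat n :: complex"
    have "(moebius a b c d)^^Suc n = moebius a b c d \<circ> (moebius a b c d)^^n" by simp
    also have "\<dots> = moebius (a*(l + ?m*(a-l)) + b*(?m*c)) (a*(?m*b) + b*(l + ?m*(d-l)))
          (c*(l + ?m*(a-l)) + d*(?m*c)) (c*(?m*b) + d*(l + ?m*(d-l)))"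
    proof -
      have "(l + ?m*(a-l))*(l + ?m*(d-l)) - (?m*b)*(?m*c) = l^2" using parabolic l by algebra
      then show ?thesis unfolding Suc.IH using \<open>l \<noteq> 0\<close> by (simp add: moebius_comp)
    qed
    also have "\<dots> = moebius (l*(l + (?m+1)*(a-l))) (l*((?m+1)*b)) (l*((?m+1)*c)) (l*(l + (?m+1)*(d-l)))"
    proof -
      have "a*(l + ?m*(a-l)) + b*(?m*c) = l*(l + (?m+1)*(a-l))"
        "a*(?m*b) + b*(l + ?m*(d-l)) = l*((?m+1)*b)"
        "c*(l + ?m*(a-l)) + d*(?m*c) = l*((?m+1)*c)"
        "c*(?m*b) + d*(l + ?m*(d-l)) = l*(l + (?m+1)*(d-l))"
        using parabolic l by algebra+
      then show ?thesis by simp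
    qed
    also have "\<dots> = moebius (l + (?m+1)*(a-l)) ((?m+1)*b) ((?m+1)*c) (l + (?m+1)*(d-l))"
      by (rule moebius_scale[OF \<open>l \<noteq> 0\<close>])
    finally show ?case by (simp add: add.commute)
  qed
qed

lemma moebius_finite_order_fixed_points:
  assumes det: "a*d - b*c \<noteq> 0" and nontrivial: "moebius a b c d \<noteq> id"
    and "n > 0" and order: "(moebius a b c d)^^n = id"
  shows "\<exists>p q. p \<noteq> q \<and> moebius a b c d p = p \<and> moebius a b c d q = q"
proof (cases "(a - d)^2 + 4*b*c = 0")
  case True
  define l where "l = (a + d) / 2"
  have l: "2*l = a + d" unfolding l_def by simp
  let ?m = "of_nat n :: complex"
  have "moebius (l + ?m*(a - l)) (?m*b) (?m*c) (l + ?m*(d - l)) = id"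
    using moebius_funpow_parabolic[OF det True l] order by simp
  moreover have "(l + ?m*(a - l)) * (l + ?m*(d - l)) - (?m*b) * (?m*c) = a*d - b*c"
    using True l by algebra
  ultimately have "?m*b = 0 \<and> ?m*c = 0 \<and> l + ?m*(a - l) = l + ?m*(d - l)"
    using moebius_eq_id_iff det by metis
  then have "b = 0 \<and> c = 0 \<and> a = d" using \<open>n > 0\<close> by auto
  then show ?thesis using nontrivial moebius_eq_id_iff[OF det] by blast
next
  case nonparabolic: False
  show ?thesis
  proof (cases "c = 0")
    case True
    then have "a \<noteq> d" using nonparabolic by auto
    then have "moebius a b c d (Some (b / (d - a))) = Some (b / (d - a))"
      using moebius_fixes_finite_iff[OF det] True by simp
    moreover have "moebius a b c d None = None" using True by (simp add: moebius_def)
    ultimately show ?thesis by blast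
  next
    case False
    define r where "r = csqrt ((a - d)^2 + 4*b*c)"
    have r: "r^2 = (a - d)^2 + 4*b*c" "r \<noteq> 0"
      using nonparabolic unfolding r_def by auto
    have root: "c*z^2 + (d - a)*z - b = 0" if "z = (a - d + r) / (2*c) \<or> z = (a - d - r) / (2*c)" for z
    proof -
      have "2*c*z - (a - d) = r \<or> 2*c*z - (a - d) = - r" using that False by auto
      then have "(2*c*z - (a - d))^2 = r^2" by auto
      then have "4*c*(c*z^2 + (d - a)*z - b) = 0" using r(1) by algebra
      then show ?thesis using False by simp
    qed
    have "(a - d + r) / (2*c) \<noteq> (a - d - r) / (2*c)"
      using r(2) False by simp
    then show ?thesis
      using root moebius_fixes_finite_iff[OF det] by (metis option.inject)
  qed
qed

lemma is_moebius_card_fixed_points: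
  assumes "is_moebius f" "f \<noteq> id" "n > 0" "f^^n = id"
  shows "card {p. f p = p} = 2"
proof -
  obtain a b c d where det: "a*d - b*c \<noteq> 0" and f: "f = moebius a b c d"
    using assms(1) unfolding is_moebius_def by blast
  obtain p q where pq: "p \<noteq> q" "f p = p" "f q = q"
    using moebius_finite_order_fixed_points[OF det] assms(2-4) f by blast
  have "x = p \<or> x = q" if "f x = x" for x
    using is_moebius_three_fixed_points[OF assms(1) pq(2,3) that] pq(1) assms(2) by blast
  then have "{p. f p = p} = {p, q}" using pq by auto
  then show ?thesis using pq(1) by simp
qed

section \<open>Groups of transformations with two fixed points\<close>

definition comp_group :: "('a \<Rightarrow> 'a) set \<Rightarrow> ('a \<Rightarrow> 'a) monoid" where
  "comp_group T = \<lparr>carrier = T, mult = (\<circ>), one = id\<rparr>"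

locale transformation_group =
  fixes T :: "('a \<Rightarrow> 'a) set"
  assumes id_mem: "id \<in> T"
    and comp_mem: "f \<in> T \<Longrightarrow> g \<in> T \<Longrightarrow> f \<circ> g \<in> T"
    and inverse_ex: "f \<in> T \<Longrightarrow> \<exists>g\<in>T. g \<circ> f = id \<and> f \<circ> g = id"
begin

definition orbit_of :: "'a \<Rightarrow> 'a set" where
  "orbit_of x = (\<lambda>f. f x) ` T"

lemma carrier_comp_group [simp]: "carrier (comp_group T) = T"
  by (simp add: comp_group_def)

lemma group_comp_group: "group (comp_group T)"
proof (rule groupI)
  fix f assume "f \<in> carrier (comp_group T)"
  then show "\<exists>g\<in>carrier (comp_group T). g \<otimes>\<^bsub>comp_group T\<^esub> f = \<one>\<^bsub>comp_group T\<^esub>"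
    using inverse_ex by (fastforce simp: comp_group_def)
qed (auto simp: comp_group_def id_mem comp_mem comp_assoc)

lemma funpow_mem: "f \<in> T \<Longrightarrow> f^^n \<in> T"
  by (induction n) (simp_all add: id_mem comp_mem)

lemma surj_mem: "f \<in> T \<Longrightarrow> surj f"
  using inverse_ex by (metis comp_apply id_apply surjI)

lemma finite_order:
  assumes "finite T" "f \<in> T"
  shows "\<exists>n>0. f^^n = id"
proof -
  have "range (\<lambda>n. f^^n) \<subseteq> T" using funpow_mem assms(2) by blast
  then have "\<not> inj (\<lambda>n. f^^n)" using assms(1) finite_subset finite_imageD infinite_UNIV_nat by blast
  then obtain i j where "i < j" "f^^i = f^^j" unfolding inj_def by (metis linorder_neq_iff)
  then have "f^^(j - i) \<circ> f^^i = id \<circ> f^^i"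
    using funpow_add[of "j - i" i f] by simp
  then have "f^^(j - i) = id"
    using surj_fun_eq[of "f^^i" UNIV] surj_fn[OF surj_mem[OF assms(2)]] by (metis comp_apply)
  then show ?thesis using \<open>i < j\<close> by (intro exI[of _ "j - i"]) simp
qed

lemma invariant_action:
  assumes "\<And>f x. f \<in> T \<Longrightarrow> x \<in> E \<Longrightarrow> f x \<in> E"
  shows "group_action (comp_group T) E (\<lambda>f. restrict f E)"
  unfolding group_action_def group_hom_def group_hom_axioms_def hom_def
proof (intro conjI group_comp_group group_BijGroup CollectI ballI)
  have "bij_betw f E E" if "f \<in> T" for f
  proof -
    obtain g where "g \<in> T" "g \<circ> f = id" "f \<circ> g = id" using inverse_ex[OF \<open>f \<in> T\<close>] by blast
    then show ?thesis
      using assms that by (intro bij_betwI[of _ _ _ g]) (auto simp: fun_eq_iff)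
  qed
  then show "(\<lambda>f. restrict f E) \<in> carrier (comp_group T) \<rightarrow> carrier (BijGroup E)"
    by (auto simp: comp_group_def BijGroup_def Bij_def bij_betw_def inj_on_def)
  fix f g assume "f \<in> carrier (comp_group T)" "g \<in> carrier (comp_group T)"
  then show "restrict (f \<otimes>\<^bsub>comp_group T\<^esub> g) E = restrict f E \<otimes>\<^bsub>BijGroup E\<^esub> restrict g E"
    using assms \<open>\<And>f. f \<in> T \<Longrightarrow> bij_betw f E E\<close>
    by (auto simp: comp_group_def BijGroup_def Bij_def compose_def fun_eq_iff bij_betw_def)
qed

lemma orbit_restrict:
  "x \<in> E \<Longrightarrow> orbit (comp_group T) (\<lambda>f. restrict f E) x = orbit_of x"
  by (auto simp: orbit_def orbit_of_def comp_group_def)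

lemma orbits_restrict: "orbits (comp_group T) E (\<lambda>f. restrict f E) = orbit_of ` E"
  unfolding orbits_def image_def using orbit_restrict by blast

lemma stabilizer_restrict:
  "x \<in> E \<Longrightarrow> stabilizer (comp_group T) (\<lambda>f. restrict f E) x = {f \<in> T. f x = x}"
  by (auto simp: stabilizer_def comp_group_def)

lemma orbit_of_self: "x \<in> orbit_of x"
  using id_mem unfolding orbit_of_def by (metis id_apply image_eqI)

lemma orbit_of_subset:
  assumes "\<And>f. f \<in> T \<Longrightarrow> f ` S \<subseteq> S" "x \<in> S"
  shows "orbit_of x \<subseteq> S"
  using assms unfolding orbit_of_def by blast

lemma card_orbit_stabilizer: "card (orbit_of x) * card {f \<in> T. f x = x} = card T"
proof -
  interpret group_action "comp_group T" UNIV "\<lambda>f. restrict f UNIV"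
    by (rule invariant_action) simp
  show ?thesis
    using orbit_stabilizer_theorem[of x]
    by (simp add: orbit_restrict stabilizer_restrict order_def)
qed

lemma card_eq_sum_card_orbits:
  assumes "finite E" "\<And>f x. f \<in> T \<Longrightarrow> x \<in> E \<Longrightarrow> f x \<in> E"
  shows "card E = (\<Sum>Q\<in>orbit_of ` E. card Q)"
proof -
  interpret group_action "comp_group T" E "\<lambda>f. restrict f E"
    using assms(2) by (rule invariant_action)
  have "E = \<Union>(orbit_of ` E)" using orbits_coverture by (simp add: orbits_restrict)
  moreover have "pairwise disjnt (orbit_of ` E)"
    using disjoint_union unfolding orbits_restrict pairwise_def disjnt_def by blast
  moreover have "Q \<subseteq> E" if "Q \<in> orbit_of ` E" for Q
    using that orbits_coverture by (auto simp: orbits_restrict)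
  ultimately show ?thesis using assms(1) by (metis card_Union_disjoint finite_subset)
qed

lemma finite_if_determined_by_three_points:
  assumes determined: "\<And>f p q r. f \<in> T \<Longrightarrow> f p = p \<Longrightarrow> f q = q \<Longrightarrow> f r = r \<Longrightarrow>
      p \<noteq> q \<Longrightarrow> p \<noteq> r \<Longrightarrow> q \<noteq> r \<Longrightarrow> f = id"
    and S: "finite S" "3 \<le> card S" "\<And>f. f \<in> T \<Longrightarrow> f ` S \<subseteq> S"
  shows "finite T"
proof -
  obtain p q r where pqr: "p \<in> S" "q \<in> S" "r \<in> S" "p \<noteq> q" "p \<noteq> r" "q \<noteq> r"
  proof -
    obtain B where "B \<subseteq> S" "card B = 3" using S(2) by (meson obtain_subset_with_card_n)
    then show ?thesis using that by (auto simp: card_3_iff)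
  qed
  have "inj_on (\<lambda>f. (f p, f q, f r)) T"
  proof (rule inj_onI)
    fix f g assume "f \<in> T" "g \<in> T" and agree: "(f p, f q, f r) = (g p, g q, g r)"
    obtain g' where g': "g' \<in> T" "g' \<circ> g = id" "g \<circ> g' = id"
      using inverse_ex[OF \<open>g \<in> T\<close>] by blast
    have "g' \<circ> f = id"
      using agree pqr fun_cong[OF g'(2)]
      by (intro determined[OF comp_mem[OF g'(1) \<open>f \<in> T\<close>], where p=p and q=q and r=r]) auto
    then have "g \<circ> g' \<circ> f = g" by (simp add: comp_assoc)
    then show "f = g" using g'(3) by simp
  qed
  moreover have "(\<lambda>f. (f p, f q, f r)) ` T \<subseteq> S \<times> S \<times> S" using S(3) pqr by blast
  ultimately show ?thesis
    using S(1) by (meson finite_SigmaI finite_imageD finite_subset)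
qed

end

lemma cofactor_cases:
  fixes s N :: nat
  assumes "s dvd N" "2 * s \<le> N" "N > 0"
  shows "N = 2 * s \<or> N = 3 * s \<or> N = 4 * s \<or> N = 5 * s \<or> 6 * s \<le> N"
proof -
  obtain k where k: "N = s * k" using assms(1) by blast
  then have "2 \<le> k" using assms(2,3) by (cases "k = 0 \<or> k = 1") auto
  then have "k \<in> {2, 3, 4, 5} \<or> 6 \<le> k" by auto
  then show ?thesis using k by (auto simp: mult.commute)
qed

text \<open>Write the three sizes as N/a, N/b, N/c with a, b, c \<ge> 2; then 1/a + 1/b + 1/c = 1 + 2/N.
  For N \<ge> 25 this leaves only \<open>{a, b, c} = {2, 2, N/2}\<close>, and \<open>{2, 3, 5}\<close> with N = 60.\<close>
lemma orbit_sizes_arith: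
  fixes N s t u :: nat
  assumes "25 \<le> N" "s dvd N" "t dvd N" "u dvd N" "2 * s \<le> N" "2 * t \<le> N" "2 * u \<le> N"
    and "s + t + u = N + 2" "s \<le> 10"
  shows "s = 2 \<and> 10 < t \<and> 10 < u"
proof -
  have "N > 0" using assms(1) by simp
  from cofactor_cases[OF assms(2,5) this] cofactor_cases[OF assms(3,6) this]
    cofactor_cases[OF assms(4,7) this]
  show ?thesis using assms(1,8,9) by (elim disjE) linarith+
qed

locale two_fixed_points_group = transformation_group +
  assumes finite_group: "finite T"
    and card_fixed_points: "f \<in> T \<Longrightarrow> f \<noteq> id \<Longrightarrow> card {p. f p = p} = 2"
begin

definition poles :: "'a set" where
  "poles = {p. \<exists>f\<in>T. f \<noteq> id \<and> f p = p}"

lemma finite_poles: "finite poles"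
proof -
  have "poles = (\<Union>f\<in>T - {id}. {p. f p = p})" unfolding poles_def by blast
  moreover have "finite {p. f p = p}" if "f \<in> T - {id}" for f
    using card_fixed_points that by (intro card_ge_0_finite) simp
  ultimately show ?thesis using finite_group by simp
qed

lemma poles_invariant:
  assumes "f \<in> T" "p \<in> poles"
  shows "f p \<in> poles"
proof -
  obtain h where h: "h \<in> T" "h \<noteq> id" "h p = p" using assms(2) unfolding poles_def by blast
  obtain f' where f': "f' \<in> T" "f' \<circ> f = id" "f \<circ> f' = id" using inverse_ex[OF assms(1)] by blast
  have "(f \<circ> h \<circ> f') (f p) = f p" using h(3) fun_cong[OF f'(2)] by simp
  moreover have "f \<circ> h \<circ> f' \<noteq> id"
  proof
    assume conj_id: "f \<circ> h \<circ> f' = id"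
    have "h = (f' \<circ> f) \<circ> h \<circ> (f' \<circ> f)" using f'(2) by simp
    also have "\<dots> = f' \<circ> (f \<circ> h \<circ> f') \<circ> f" by (simp add: comp_assoc)
    also have "\<dots> = id" using conj_id f'(2) by simp
    finally show False using h(2) by contradiction
  qed
  ultimately show ?thesis using assms(1) h(1) f'(1) comp_mem unfolding poles_def by blast
qed

lemma burnside_poles: "card (orbit_of ` poles) * card T = card poles + 2 * (card T - 1)"
proof -
  interpret group_action "comp_group T" poles "\<lambda>f. restrict f poles"
    using poles_invariant by (rule invariant_action)
  have invariants: "invariants poles (\<lambda>f. restrict f poles) f = {p \<in> poles. f p = p}" for f
    by (auto simp: invariants_def)
  have fixed: "{p \<in> poles. f p = p} = {p. f p = p}" if "f \<in> T - {id}" for f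
    using that unfolding poles_def by blast
  have "card (orbit_of ` poles) * card T = (\<Sum>f\<in>T. card {p \<in> poles. f p = p})"
    using burnside finite_group finite_poles
    by (simp add: orbits_restrict order_def invariants)
  also have "\<dots> = card poles + (\<Sum>f\<in>T - {id}. card {p \<in> poles. f p = p})"
    using finite_group id_mem by (simp add: sum.remove)
  also have "(\<Sum>f\<in>T - {id}. card {p \<in> poles. f p = p}) = (\<Sum>f\<in>T - {id}. 2)"
    using fixed card_fixed_points by (intro sum.cong) auto
  also have "\<dots> = 2 * (card T - 1)" using finite_group id_mem by simp
  finally show ?thesis .
qed

lemma pole_orbit_size:
  assumes "p \<in> poles"
  shows "card (orbit_of p) dvd card T" "2 * card (orbit_of p) \<le> card T"
proof -
  obtain h where "h \<in> T" "h \<noteq> id" "h p = p" using assms unfolding poles_def by blast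
  then have "card {id, h} \<le> card {f \<in> T. f p = p}"
    using id_mem finite_group by (intro card_mono) auto
  then have "card (orbit_of p) * 2 \<le> card (orbit_of p) * card {f \<in> T. f p = p}"
    using \<open>h \<noteq> id\<close> by simp
  then show "card (orbit_of p) dvd card T" "2 * card (orbit_of p) \<le> card T"
    using card_orbit_stabilizer[of p] by (metis dvd_triv_left, simp add: mult.commute)
qed

lemma pole_if_card_orbit_less:
  assumes "card (orbit_of x) < card T"
  shows "x \<in> poles"
proof (rule ccontr)
  assume "x \<notin> poles"
  then have "{f \<in> T. f x = x} \<subseteq> {id}" unfolding poles_def by blast
  then have "card {f \<in> T. f x = x} \<le> 1" using card_mono[of "{id}" "{f \<in> T. f x = x}"] by simp
  then have "card T \<le> card (orbit_of x)"
    using card_orbit_stabilizer[of x] mult_le_mono2 by (metis mult.right_neutral)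
  then show False using assms by simp
qed

lemma pole_orbits:
  assumes "2 < card poles"
  shows "card (orbit_of ` poles) = 3" "(\<Sum>Q\<in>orbit_of ` poles. card Q) = card T + 2"
proof -
  define k where "k = card (orbit_of ` poles)"
  define N where "N = card T"
  have burnside: "k * N = card poles + 2 * (N - 1)"
    using burnside_poles unfolding k_def N_def .
  have sum: "card poles = (\<Sum>Q\<in>orbit_of ` poles. card Q)"
    using card_eq_sum_card_orbits[OF finite_poles] poles_invariant by blast
  have "N > 0" unfolding N_def using finite_group id_mem card_gt_0_iff by blast
  have "2 * card poles = (\<Sum>Q\<in>orbit_of ` poles. 2 * card Q)"
    unfolding sum by (simp add: sum_distrib_left)
  also have "\<dots> \<le> (\<Sum>Q\<in>orbit_of ` poles. N)"
    using pole_orbit_size(2) unfolding N_def by (intro sum_mono) auto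
  also have "\<dots> = k * N" unfolding k_def by simp
  finally have "2 * card poles \<le> k * N" .
  then have "k * N < 4 * N" using burnside \<open>N > 0\<close> by linarith
  then have "k < 4" by simp
  moreover have "\<not> k \<le> 2"
  proof
    assume "k \<le> 2"
    then have "k * N \<le> 2 * N" by simp
    then show False using burnside assms \<open>N > 0\<close> by linarith
  qed
  ultimately have "k = 3" by simp
  then show "card (orbit_of ` poles) = 3" "(\<Sum>Q\<in>orbit_of ` poles. card Q) = card T + 2"
    using burnside sum \<open>N > 0\<close> unfolding k_def N_def by auto
qed

lemma small_pole_orbit:
  assumes "25 \<le> card T" "2 < card poles" "Q \<in> orbit_of ` poles" "card Q \<le> 10"
  shows "card Q = 2 \<and> (\<forall>Q'\<in>orbit_of ` poles - {Q}. 10 < card Q')"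
proof -
  have size: "card R dvd card T" "2 * card R \<le> card T" if "R \<in> orbit_of ` poles" for R
    using that pole_orbit_size by auto
  have "card (orbit_of ` poles - {Q}) = 2"
    using pole_orbits(1)[OF assms(2)] assms(3) finite_poles by simp
  then obtain Q' Q'' where others: "orbit_of ` poles - {Q} = {Q', Q''}" "Q' \<noteq> Q''"
    by (meson card_2_iff)
  then have Q': "Q' \<in> orbit_of ` poles" "Q \<noteq> Q'" and Q'': "Q'' \<in> orbit_of ` poles" "Q \<noteq> Q''"
    by auto
  have "orbit_of ` poles = {Q, Q', Q''}" using others(1) assms(3) by auto
  then have "card Q + card Q' + card Q'' = card T + 2"
    using pole_orbits(2)[OF assms(2)] others(2) Q'(2) Q''(2) by simp
  then have "card Q = 2 \<and> 10 < card Q' \<and> 10 < card Q''"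
    using orbit_sizes_arith[OF assms(1) size(1)[OF assms(3)] size(1)[OF Q'(1)] size(1)[OF Q''(1)]
        size(2)[OF assms(3)] size(2)[OF Q'(1)] size(2)[OF Q''(1)]] assms(4)
    by blast
  then show ?thesis using others(1) by auto
qed

lemma card_le_24:
  assumes S: "finite S" "3 \<le> card S" "card S \<le> 10" "\<And>f. f \<in> T \<Longrightarrow> f ` S \<subseteq> S"
  shows "card T \<le> 24"
proof (rule ccontr)
  assume "\<not> card T \<le> 24"
  then have big: "25 \<le> card T" by simp
  have small: "card (orbit_of x) \<le> 10" if "x \<in> S" for x
    using card_mono[OF S(1) orbit_of_subset[OF S(4) that]] S(3) by simp
  have "S \<subseteq> poles"
  proof
    fix x assume "x \<in> S"
    then have "card (orbit_of x) < card T" using small big by fastforce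
    then show "x \<in> poles" by (rule pole_if_card_orbit_less)
  qed
  then have "card S \<le> card poles" using finite_poles by (rule card_mono[rotated])
  then have "2 < card poles" using S(2) by simp
  obtain x where "x \<in> S" using S(2) by fastforce
  let ?Q = "orbit_of x"
  have "?Q \<in> orbit_of ` poles" using \<open>S \<subseteq> poles\<close> \<open>x \<in> S\<close> by blast
  from small_pole_orbit[OF big \<open>2 < card poles\<close> this small[OF \<open>x \<in> S\<close>]]
  have "card ?Q = 2" and large: "\<forall>Q'\<in>orbit_of ` poles - {?Q}. 10 < card Q'" by blast+
  have "\<not> S \<subseteq> ?Q"
  proof
    assume "S \<subseteq> ?Q"
    moreover have "finite ?Q" using \<open>card ?Q = 2\<close> by (intro card_ge_0_finite) simp
    ultimately have "card S \<le> card ?Q" by (rule card_mono[rotated])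
    then show False using S(2) \<open>card ?Q = 2\<close> by simp
  qed
  then obtain y where "y \<in> S" "y \<notin> ?Q" by blast
  then have "orbit_of y \<in> orbit_of ` poles - {?Q}" using \<open>S \<subseteq> poles\<close> orbit_of_self by blast
  then have "10 < card (orbit_of y)" using large by blast
  then show False using small[OF \<open>y \<in> S\<close>] by simp
qed

end

section \<open>The stabilizer of a divisor\<close>

lemma card_set_mset_le_size: "card (set_mset M) \<le> size M"
  by (metis mset_set_set_mset_msubset size_mset_mono size_mset_set)

lemma moebius_stabilizer_set_mset:
  "f \<in> moebius_stabilizer D \<Longrightarrow> f ` set_mset D = set_mset D"
  unfolding moebius_stabilizer_def by (metis (mono_tags, lifting) mem_Collect_eq multiset.set_map)

lemma transformation_group_moebius_stabilizer: "transformation_group (moebius_stabilizer D)"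
proof
  show "id \<in> moebius_stabilizer D"
    unfolding moebius_stabilizer_def using is_moebius_id by simp
  fix f g assume f: "f \<in> moebius_stabilizer D"
  show "g \<in> moebius_stabilizer D \<Longrightarrow> f \<circ> g \<in> moebius_stabilizer D"
    using f is_moebius_comp unfolding moebius_stabilizer_def by (simp add: multiset.map_comp[symmetric])
  obtain g where g: "is_moebius g" "g \<circ> f = id" "f \<circ> g = id"
    using f is_moebius_inverse unfolding moebius_stabilizer_def by blast
  have "image_mset g D = image_mset g (image_mset f D)" using f unfolding moebius_stabilizer_def by simp
  also have "\<dots> = D" by (simp add: multiset.map_comp g(2))
  finally show "\<exists>g\<in>moebius_stabilizer D. g \<circ> f = id \<and> f \<circ> g = id"
    using g unfolding moebius_stabilizer_def by blast
qed

lemma two_fixed_points_group_moebius_stabilizer: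
  assumes "3 \<le> card (set_mset D)"
  shows "two_fixed_points_group (moebius_stabilizer D)"
proof -
  interpret transformation_group "moebius_stabilizer D"
    by (rule transformation_group_moebius_stabilizer)
  have moebius: "is_moebius f" if "f \<in> moebius_stabilizer D" for f
    using that unfolding moebius_stabilizer_def by simp
  have "finite (moebius_stabilizer D)"
    using is_moebius_three_fixed_points moebius moebius_stabilizer_set_mset assms
    by (intro finite_if_determined_by_three_points[of "set_mset D"]) auto
  moreover have "card {p. f p = p} = 2" if "f \<in> moebius_stabilizer D" "f \<noteq> id" for f
    using finite_order[OF calculation that(1)] is_moebius_card_fixed_points moebius that by blast
  ultimately show ?thesis
    by unfold_locales
qed

theorem lemma4p7:
  fixes D :: "cp1 multiset"
  assumes "size D = 10"
    and "card (set_mset D) \<ge> 3"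
  shows "finite (moebius_stabilizer D) \<and> card (moebius_stabilizer D) \<le> 24"
proof -
  interpret two_fixed_points_group "moebius_stabilizer D"
    using assms(2) by (rule two_fixed_points_group_moebius_stabilizer)
  have "card (set_mset D) \<le> 10" using card_set_mset_le_size[of D] assms(1) by simp
  then show ?thesis
    using finite_group card_le_24[of "set_mset D"] assms(2) moebius_stabilizer_set_mset by simp
qed

end
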